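(* Let $\mathcal X$ be the ternary coalescent started from a finite configuration $\mathbf r=(r_1,\dots,r_N)\in\mathcal S^\downarrow$ with $N=2n+1$, $n\in\mathbb Z_+$, and total mass $M=r_1+\dots+r_N$. Let $T_0=0$, $T_k$ the time of the $k$-th coagulation ($1\le k\le n$), and $\mathcal X'_k=\mathcal X(T_k)$, $0\le k\le n$. Then: (i) The waiting times $\Delta_k=T_k-T_{k-1}$, $k=1,\dots,n$, are independent exponential random variables with respective parameters $\alpha(k)=\frac12(M+N+2-2k)(N+1-2k)(N-2k)$. In particular, the sequences $(T_k)_{0\le k\le n}$ and $(\mathcal X'_k)_{0\le k\le n}$ are independent. (ii) $(\mathcal X'_k)_{0\le k\le n}$ is a Markov chain with transition probabilities $$\mathbb P\big(\mathcal X'_{l+1}=\mathbf s^{i\oplus j\oplus k}\mid \mathcal X'_l=\mathbf s\big)=\frac{s_i+s_j+s_k+3}{\alpha(l+1)},$$ for $0\le l<n$, $1\le i<j<k\le N-2l$, and every $\mathbf s=(s_1,\dots,s_{N-2l})\in\mathcal S^\downarrow$ with $s_1+\dots+s_{N-2l}=M$ and $\mathbb P(\mathcal X'_l=\mathbf s)>0$.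
   Context: $\mathcal S^\downarrow$ is the set of nonincreasing sequences $s_1\ge s_2\ge\dots\ge 0$ with finitely many nonzero terms, identified with their nonzero entries (particles). For indices $i<j<k$ of nonzero entries, $\mathbf s^{i\oplus j\oplus k}$ is obtained by removing $s_i,s_j,s_k$, inserting $s_i+s_j+s_k$ and reranking decreasingly. The ternary coalescent is the continuous-time Markov jump process on $\mathcal S^\downarrow$ with jump rates $q(\mathbf s,\cdot)=\sum_{1\le i<j<k,\ s_k>0}(s_i+s_j+s_k+3)\delta_{\mathbf s^{i\oplus j\oplus k}}$. *)

theory Defs
  imports "HOL-Probability.Probability"
begin

text \<open>Finite configurations in S-down, identified with their nonzero entries (particles):
  nonincreasing lists of strictly positive reals.\<close>
definition Sdown_fin :: "real list set" where
  "Sdown_fin = {s. sorted_wrt (\<ge>) s \<and> (\<forall>x\<in>set s. x > 0)}"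

text \<open>Merging particles i,j,k (0-based indices) and reranking decreasingly.\<close>
definition merge3 :: "real list \<Rightarrow> nat \<Rightarrow> nat \<Rightarrow> nat \<Rightarrow> real list" where
  "merge3 s i j k =
     rev (sort ((s!i + s!j + s!k) # [s!m. m \<leftarrow> [0..<length s], m \<notin> {i, j, k}]))"

definition triples :: "real list \<Rightarrow> (nat \<times> nat \<times> nat) set" where
  "triples s = {(i, j, k). i < j \<and> j < k \<and> k < length s}"

definition trate :: "real list \<Rightarrow> nat \<times> nat \<times> nat \<Rightarrow> real" where
  "trate s t = (case t of (i, j, k) \<Rightarrow> s!i + s!j + s!k + 3)"

definition coal_rate :: "real list \<Rightarrow> real list \<Rightarrow> real" where
  "coal_rate s t = (\<Sum>x\<in>{x \<in> triples s. merge3 s (fst x) (fst (snd x)) (snd (snd x)) = t}. trate s x)"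

definition coal_total :: "real list \<Rightarrow> real" where
  "coal_total s = (\<Sum>x\<in>triples s. trate s x)"

definition jump_prob :: "real list \<Rightarrow> real list \<Rightarrow> real" where
  "jump_prob s t = coal_rate s t / coal_total s"

definition Exp_law :: "real \<Rightarrow> real measure" where
  "Exp_law c = density lborel (exponential_density c)"

definition hist :: "'w measure \<Rightarrow> (nat \<Rightarrow> 'w \<Rightarrow> real list) \<Rightarrow> nat \<Rightarrow> (nat \<Rightarrow> real list) \<Rightarrow> 'w set" where
  "hist P X l ss = {\<omega> \<in> space P. \<forall>k\<le>l. X k \<omega> = ss k}"

definition cond_prob :: "'w measure \<Rightarrow> 'w set \<Rightarrow> 'w set \<Rightarrow> real" where
  "cond_prob P A B = measure P (A \<inter> B) / measure P B"

text \<open>Jump-hold description of the ternary coalescent started from r with 2n+1 particles: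
  X' k is the state after the k-th coagulation (k \<le> n), H k (1 \<le> k \<le> n) is the k-th
  holding time T_k - T_(k-1).  The jump chain is Markov with kernel q(s,.)/q(s), and
  conditionally on the jump chain the holding times are independent exponentials with
  parameters q(X'_(k-1)).\<close>
definition ternary_coalescent_jump_hold ::
  "'w measure \<Rightarrow> real list \<Rightarrow> nat \<Rightarrow> (nat \<Rightarrow> 'w \<Rightarrow> real list) \<Rightarrow> (nat \<Rightarrow> 'w \<Rightarrow> real) \<Rightarrow> bool" where
  "ternary_coalescent_jump_hold P r n X H \<longleftrightarrow>
     prob_space P \<and>
     (\<forall>k. X k \<in> measurable P (count_space UNIV)) \<and>
     (\<forall>k. H k \<in> borel_measurable P) \<and>
     (\<forall>\<omega>\<in>space P. X 0 \<omega> = r) \<and>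
     (\<forall>l<n. \<forall>ss. measure P (hist P X (Suc l) ss)
                   = measure P (hist P X l ss) * jump_prob (ss l) (ss (Suc l))) \<and>
     (\<forall>ss B. (\<forall>k. B k \<in> sets borel) \<longrightarrow>
        measure P (hist P X n ss \<inter> {\<omega> \<in> space P. \<forall>k\<in>{1..n}. H k \<omega> \<in> B k})
          = measure P (hist P X n ss) * (\<Prod>k=1..n. measure (Exp_law (coal_total (ss (k - 1)))) (B k)))"

end

theory Submission
  imports Defs
begin

text \<open>Along any history of the jump chain each coagulation removes two particles and conserves
  the mass, so after \<open>k - 1\<close> coagulations there are \<open>L = N + 2 - 2k\<close> particles of total mass
  \<open>M\<close>; summing the rates over the triples gives the total rate
  \<open>(L - 1)(L - 2)(M + L)/2 = \<alpha>(k)\<close>, whatever the history.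
  Hence the conditional law of the holding times given the history is the same product of
  exponential laws for every history: the holding times are independent of the jump chain and of
  each other, with parameters \<open>\<alpha>(k)\<close>. The transition probabilities of the chain follow by summing
  the jump-hold recursion over the finitely many histories.\<close>

section \<open>Combinatorics of the ternary coalescent\<close>

lemma sum_ordered_pairs:
  fixes a :: "nat \<Rightarrow> real"
  shows "(\<Sum>(i, j)\<in>{(i, j). i < j \<and> j < m}. a i + a j) = (real m - 1) * (\<Sum>i<m. a i)"
proof (induction m)
  case 0
  then show ?case by simp
next
  case (Suc m)
  have split: "{(i, j). i < j \<and> j < Suc m} = {(i, j). i < j \<and> j < m} \<union> (\<lambda>i. (i, m)) ` {..<m}"
    by auto
  have fin: "finite {(i, j). i < j \<and> j < (m::nat)}"
    by (rule finite_subset[of _ "{..<m} \<times> {..<m}"]) auto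
  have "(\<Sum>(i, j)\<in>{(i, j). i < j \<and> j < Suc m}. a i + a j)
      = (\<Sum>(i, j)\<in>{(i, j). i < j \<and> j < m}. a i + a j) + (\<Sum>i<m. a i + a m)"
    unfolding split by (subst sum.union_disjoint) (auto simp: fin sum.reindex inj_on_def)
  then show ?case using Suc by (simp add: sum.distrib algebra_simps)
qed

lemma card_ordered_pairs: "real (card {(i, j). i < j \<and> j < m}) = real m * (real m - 1) / 2"
  using sum_ordered_pairs[of "\<lambda>_. 1 / 2" m] by simp

lemma sum_ordered_triples:
  fixes a :: "nat \<Rightarrow> real"
  shows "(\<Sum>(i, j, k)\<in>{(i, j, k). i < j \<and> j < k \<and> k < m}. a i + a j + a k)
           = (real m - 1) * (real m - 2) / 2 * (\<Sum>i<m. a i)"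
proof (induction m)
  case 0
  then show ?case by simp
next
  case (Suc m)
  let ?pairs = "{(i, j). i < j \<and> j < m}"
  have split: "{(i, j, k). i < j \<and> j < k \<and> k < Suc m}
      = {(i, j, k). i < j \<and> j < k \<and> k < m} \<union> (\<lambda>(i, j). (i, j, m)) ` ?pairs"
    by (auto simp: image_iff)
  have fin: "finite {(i, j, k). i < j \<and> j < k \<and> k < (m::nat)}" "finite ?pairs"
    by (rule finite_subset[of _ "{..<m} \<times> {..<m} \<times> {..<m}"], force, simp)
       (rule finite_subset[of _ "{..<m} \<times> {..<m}"], auto)
  have "(\<Sum>(i, j, k)\<in>{(i, j, k). i < j \<and> j < k \<and> k < Suc m}. a i + a j + a k)
      = (\<Sum>(i, j, k)\<in>{(i, j, k). i < j \<and> j < k \<and> k < m}. a i + a j + a k)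
        + (\<Sum>(i, j)\<in>?pairs. (a i + a j) + a m)"
    unfolding split
    by (subst sum.union_disjoint) (auto simp: fin sum.reindex inj_on_def intro!: sum.cong)
  also have "(\<Sum>(i, j)\<in>?pairs. (a i + a j) + a m) = (real m - 1) * (\<Sum>i<m. a i) + real (card ?pairs) * a m"
    by (subst sum_ordered_pairs[symmetric]) (simp add: sum.distrib split_def)
  finally show ?case
    using Suc by (simp add: card_ordered_pairs algebra_simps add_divide_distrib diff_divide_distrib)
qed

text \<open>Each particle lies in \<open>(L - 1)(L - 2)/2\<close> of the triples, whence the total rate.\<close>
lemma coal_total_eq:
  "coal_total s = (real (length s) - 1) * (real (length s) - 2) / 2 * (sum_list s + real (length s))"
proof -
  have "coal_total s
      = (\<Sum>(i, j, k)\<in>{(i, j, k). i < j \<and> j < k \<and> k < length s}. (s!i + 1) + (s!j + 1) + (s!k + 1))"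
    unfolding coal_total_def triples_def trate_def by (intro sum.cong) auto
  also have "\<dots> = (real (length s) - 1) * (real (length s) - 2) / 2 * (\<Sum>i<length s. s!i + 1)"
    by (rule sum_ordered_triples)
  also have "(\<Sum>i<length s. s!i + 1) = sum_list s + real (length s)"
    by (simp add: sum.distrib sum_list_sum_nth atLeast0LessThan)
  finally show ?thesis .
qed

lemma sum_list_sort: "sum_list (sort xs) = sum_list (xs :: 'a :: {comm_monoid_add, linorder} list)"
  by (metis mset_sort sum_mset_sum_list)

lemma listcompr_eq_map_filter: "[f x. x \<leftarrow> xs, P x] = map f (filter P xs)"
  by (induction xs) auto

lemma
  assumes "i < j" "j < k" "k < length s"
  shows length_merge3: "length (merge3 s i j k) = length s - 2"
    and sum_list_merge3: "sum_list (merge3 s i j k) = sum_list s"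
proof -
  let ?rest = "filter (\<lambda>m. m \<notin> {i, j, k}) [0..<length s]"
  have merge3_eq: "merge3 s i j k = rev (sort ((s!i + s!j + s!k) # map ((!) s) ?rest))"
    unfolding merge3_def listcompr_eq_map_filter ..
  have set_rest: "set ?rest = {0..<length s} - {i, j, k}"
    by auto
  have "length ?rest = card ({0..<length s} - {i, j, k})"
    using distinct_card[of ?rest] set_rest by simp
  also have "\<dots> = length s - 3"
    using assms by (subst card_Diff_subset) auto
  finally show "length (merge3 s i j k) = length s - 2"
    unfolding merge3_eq using assms by simp
  have sum_rest: "sum_list (map ((!) s) ?rest) = sum ((!) s) {0..<length s} - sum ((!) s) {i, j, k}"
    using sum_list_distinct_conv_sum_set[of ?rest "(!) s"] set_rest assms by (simp add: sum_diff)
  have "sum_list (merge3 s i j k) = s!i + s!j + s!k + sum_list (map ((!) s) ?rest)"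
    unfolding merge3_eq sum_list_rev sum_list_sort by simp
  also have "\<dots> = sum_list s"
    unfolding sum_rest using assms by (simp add: sum_list_sum_nth)
  finally show "sum_list (merge3 s i j k) = sum_list s" .
qed

primrec reachable :: "real list \<Rightarrow> nat \<Rightarrow> real list set" where
  "reachable r 0 = {r}"
| "reachable r (Suc l) = (\<Union>s\<in>reachable r l. (\<lambda>(i, j, k). merge3 s i j k) ` triples s)"

lemma finite_triples: "finite (triples s)"
  unfolding triples_def
  by (rule finite_subset[of _ "{..<length s} \<times> {..<length s} \<times> {..<length s}"]) auto

lemma finite_reachable: "finite (reachable r l)"
  by (induction l) (auto simp: finite_triples)

lemma reachable_length_sum_list:
  assumes "s \<in> reachable r l"
  shows "length s = length r - 2 * l \<and> sum_list s = sum_list r"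
  using assms
proof (induction l arbitrary: s)
  case 0
  then show ?case by simp
next
  case (Suc l)
  then obtain s' i j k where "s' \<in> reachable r l" "(i, j, k) \<in> triples s'" "s = merge3 s' i j k"
    by auto
  then show ?case
    using Suc.IH length_merge3 sum_list_merge3 by (auto simp: triples_def)
qed

lemma sum_jump_prob:
  assumes "finite R" "(\<lambda>(i, j, k). merge3 s i j k) ` triples s \<subseteq> R" "coal_total s \<noteq> 0"
  shows "(\<Sum>t\<in>R. jump_prob s t) = 1"
proof -
  have "(\<Sum>t\<in>R. coal_rate s t) = coal_total s"
    unfolding coal_rate_def coal_total_def
    by (rule sum.group[OF finite_triples assms(1)]) (use assms(2) in \<open>auto simp: split_def\<close>)
  then show ?thesis
    unfolding jump_prob_def using assms(3) by (simp flip: sum_divide_distrib)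
qed

lemma prob_space_Exp_law: "0 < c \<Longrightarrow> prob_space (Exp_law c)"
  unfolding Exp_law_def by (rule prob_space_exponential_density)

lemma sets_Exp_law [simp]: "sets (Exp_law c) = sets borel"
  unfolding Exp_law_def by simp

section \<open>Product laws\<close>

lemma measure_PiM_PiE:
  assumes "finite I" "\<And>i. i \<in> I \<Longrightarrow> prob_space (M i)" "\<And>i. i \<in> I \<Longrightarrow> A i \<in> sets (M i)"
  shows "measure (PiM I M) (Pi\<^sub>E I A) = (\<Prod>i\<in>I. measure (M i) (A i))"
proof -
  define M' where "M' i = (if i \<in> I then M i else count_space {undefined})" for i
  interpret M': prob_space "M' i" for i
    using assms(2) by (cases "i \<in> I") (auto simp: M'_def intro!: prob_spaceI)
  interpret finite_product_prob_space M' I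
    by unfold_locales (rule assms(1))
  have "PiM I M = PiM I M'"
    by (rule PiM_cong) (simp_all add: M'_def)
  also have "measure \<dots> (Pi\<^sub>E I A) = (\<Prod>i\<in>I. measure (M' i) (A i))"
    using assms(3) by (intro finite_measure_PiM_emb) (simp add: M'_def)
  also have "\<dots> = (\<Prod>i\<in>I. measure (M i) (A i))"
    by (simp add: M'_def)
  finally show ?thesis .
qed

lemma (in prob_space) emeasure_distr_restrict_space:
  assumes "E \<in> events" "f \<in> measurable M N" "S \<in> sets N"
  shows "emeasure (distr (restrict_space M E) N f) S = prob (E \<inter> (f -` S \<inter> space M))"
proof -
  have E_space: "E \<subseteq> space M"
    using assms(1) by (rule sets.sets_into_space)
  have "emeasure (distr (restrict_space M E) N f) S = emeasure (restrict_space M E) (f -` S \<inter> E)"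
    using E_space measurable_restrict_space1[OF assms(2)]
    by (simp add: emeasure_distr assms(3) space_restrict_space Int_absorb2)
  also have "\<dots> = emeasure M (E \<inter> (f -` S \<inter> space M))"
    using assms(1) E_space by (subst emeasure_restrict_space) (auto intro!: arg_cong[where f = "emeasure M"])
  finally show ?thesis
    by (simp add: emeasure_eq_measure)
qed

text \<open>Both sides are finite measures in \<open>B\<close> that agree on the rectangles, which generate the
  product \<sigma>-algebra.\<close>
lemma (in prob_space) prob_Int_vimage_PiM:
  fixes Y :: "'i \<Rightarrow> 'a \<Rightarrow> real"
  assumes I: "finite I"
    and N: "\<And>i. i \<in> I \<Longrightarrow> prob_space (N i)" "\<And>i. i \<in> I \<Longrightarrow> sets (N i) = sets borel"
    and Y: "\<And>i. i \<in> I \<Longrightarrow> Y i \<in> borel_measurable M"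
    and E: "E \<in> events"
    and rect: "\<And>A. (\<And>i. A i \<in> sets borel) \<Longrightarrow>
      prob (E \<inter> {x \<in> space M. \<forall>i\<in>I. Y i x \<in> A i}) = prob E * (\<Prod>i\<in>I. measure (N i) (A i))"
    and B: "B \<in> sets (PiM I (\<lambda>_. borel))"
  shows "prob (E \<inter> ((\<lambda>x. \<lambda>i\<in>I. Y i x) -` B \<inter> space M)) = prob E * measure (PiM I N) B"
proof -
  let ?Y = "\<lambda>x. \<lambda>i\<in>I. Y i x" and ?B = "PiM I (\<lambda>_. borel :: real measure)"
  interpret Q: prob_space "PiM I N"
    using N(1) by (rule prob_space_PiM)
  have sets_Q: "sets (PiM I N) = sets ?B"
    by (intro sets_PiM_cong) (simp_all add: N(2))
  have Y_measurable: "?Y \<in> measurable M ?B"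
    using Y by (rule measurable_restrict)
  define \<nu> where "\<nu> = distr (restrict_space M E) ?B ?Y"
  have \<nu>: "emeasure \<nu> S = prob (E \<inter> (?Y -` S \<inter> space M))" if "S \<in> sets ?B" for S
    unfolding \<nu>_def using E Y_measurable that by (rule emeasure_distr_restrict_space)
  have "\<nu> = scale_measure (prob E) (PiM I N)"
  proof (rule measure_eqI_PiM_finite[OF I])
    show "sets \<nu> = sets ?B" "sets (scale_measure (prob E) (PiM I N)) = sets ?B"
      by (simp_all add: \<nu>_def sets_Q)
    show "range (\<lambda>_. space ?B) \<subseteq> prod_algebra I (\<lambda>_. borel)"
      using space_in_prod_algebra[of I "\<lambda>_. borel"] by (auto simp: space_PiM)
    show "(\<Union>_. space ?B) = space ?B" "\<And>_. emeasure \<nu> (space ?B) \<noteq> \<infinity>"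
      by (simp_all add: \<nu>)
  next
    fix A :: "'i \<Rightarrow> real set"
    assume A: "\<And>i. i \<in> I \<Longrightarrow> A i \<in> sets borel"
    define A' where "A' i = (if i \<in> I then A i else UNIV)" for i
    have "E \<inter> (?Y -` Pi\<^sub>E I A \<inter> space M) = E \<inter> {x \<in> space M. \<forall>i\<in>I. Y i x \<in> A' i}"
      by (auto simp: A'_def)
    moreover have "(\<Prod>i\<in>I. measure (N i) (A' i)) = measure (PiM I N) (Pi\<^sub>E I A)"
      using A N by (simp add: A'_def measure_PiM_PiE[OF I])
    ultimately show "emeasure \<nu> (Pi\<^sub>E I A) = emeasure (scale_measure (prob E) (PiM I N)) (Pi\<^sub>E I A)"
      using A rect[of A'] sets_Q
      by (simp add: \<nu> sets_PiM_I_finite[OF I] A'_def Q.emeasure_eq_measure ennreal_mult)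
  qed
  then have "ennreal (prob (E \<inter> (?Y -` B \<inter> space M))) = ennreal (prob E * measure (PiM I N) B)"
    using \<nu>[OF B] by (simp add: Q.emeasure_eq_measure ennreal_mult)
  then show ?thesis
    by simp
qed

section \<open>The jump chain\<close>

locale ternary_jump_hold = prob_space P for P :: "'w measure" +
  fixes r :: "real list" and n :: nat
    and X :: "nat \<Rightarrow> 'w \<Rightarrow> real list" and H :: "nat \<Rightarrow> 'w \<Rightarrow> real"
  assumes mass_nonneg: "0 \<le> sum_list r"
    and length_r: "length r = 2 * n + 1"
    and jump_hold: "ternary_coalescent_jump_hold P r n X H"
begin

lemma X_measurable: "X k \<in> measurable P (count_space UNIV)"
  using jump_hold unfolding ternary_coalescent_jump_hold_def by blast

lemma H_measurable: "H k \<in> borel_measurable P"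
  using jump_hold unfolding ternary_coalescent_jump_hold_def by blast

lemma X_0: "\<omega> \<in> space P \<Longrightarrow> X 0 \<omega> = r"
  using jump_hold unfolding ternary_coalescent_jump_hold_def by blast

lemma prob_hist_Suc:
  "l < n \<Longrightarrow> prob (hist P X (Suc l) ss) = prob (hist P X l ss) * jump_prob (ss l) (ss (Suc l))"
  using jump_hold unfolding ternary_coalescent_jump_hold_def by blast

lemma prob_hist_Int_holding_rect:
  "(\<And>k. B k \<in> sets borel) \<Longrightarrow>
    prob (hist P X n ss \<inter> {\<omega> \<in> space P. \<forall>k\<in>{1..n}. H k \<omega> \<in> B k})
      = prob (hist P X n ss) * (\<Prod>k=1..n. measure (Exp_law (coal_total (ss (k - 1)))) (B k))"
  using jump_hold unfolding ternary_coalescent_jump_hold_def by blast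

definition alpha :: "nat \<Rightarrow> real" where
  "alpha k = (sum_list r + real (2 * n + 1) + 2 - 2 * real k) * (real (2 * n + 1) + 1 - 2 * real k)
               * (real (2 * n + 1) - 2 * real k) / 2"

lemma alpha_pos: "k \<in> {1..n} \<Longrightarrow> 0 < alpha k"
  using mass_nonneg unfolding alpha_def by (intro divide_pos_pos mult_pos_pos) auto

lemma coal_total_eq_alpha:
  assumes "l < n" "length s = 2 * n + 1 - 2 * l" "sum_list s = sum_list r"
  shows "coal_total s = alpha (Suc l)"
proof -
  have length_s: "real (length s) = real (2 * n + 1) + 2 - 2 * real (Suc l)"
    using assms(1,2) by simp
  show ?thesis
    unfolding coal_total_eq alpha_def assms(3) length_s by (simp add: algebra_simps)
qed

lemma coal_total_reachable: "s \<in> reachable r l \<Longrightarrow> l < n \<Longrightarrow> coal_total s = alpha (Suc l)"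
  using reachable_length_sum_list[of s r l] length_r by (intro coal_total_eq_alpha) auto

definition histories :: "nat \<Rightarrow> (nat \<Rightarrow> real list) set" where
  "histories l = Pi\<^sub>E {..l} (reachable r)"

lemma finite_histories: "finite (histories l)"
  unfolding histories_def by (auto intro!: finite_PiE finite_reachable)

lemma coal_total_history:
  assumes "p \<in> histories n" "k \<in> {1..n}"
  shows "coal_total (p (k - 1)) = alpha k"
proof -
  have "p (k - 1) \<in> reachable r (k - 1)"
    using PiE_mem[OF assms(1)[unfolded histories_def], of "k - 1"] assms(2) by auto
  then show ?thesis
    using coal_total_reachable[of _ "k - 1"] assms(2) by auto
qed

lemma X_event: "{\<omega> \<in> space P. X k \<omega> = s} \<in> events"
  using X_measurable[of k] by (simp add: measurable_count_space_eq2 vimage_def Int_def conj_commute)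

lemma hist_event: "hist P X l p \<in> events"
proof -
  have "hist P X l p = space P \<inter> (\<Inter>k\<in>{..l}. {\<omega> \<in> space P. X k \<omega> = p k})"
    unfolding hist_def by auto
  then show ?thesis
    using X_event by auto
qed

lemma hist_cong: "(\<And>k. k \<le> l \<Longrightarrow> p k = q k) \<Longrightarrow> hist P X l p = hist P X l q"
  unfolding hist_def by auto

lemma disjoint_family_on_hist: "disjoint_family_on (hist P X l) (histories l)"
  unfolding disjoint_family_on_def
proof (intro ballI impI)
  fix p q assume "p \<in> histories l" "q \<in> histories l" "p \<noteq> q"
  then obtain k where "k \<le> l" "p k \<noteq> q k"
    unfolding histories_def by (metis PiE_ext atMost_iff)
  then show "hist P X l p \<inter> hist P X l q = {}"
    unfolding hist_def by auto
qed

lemma hist_Suc_upd: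
  "hist P X (Suc l) (p(Suc l := t)) = {\<omega> \<in> space P. X (Suc l) \<omega> = t} \<inter> hist P X l p"
  unfolding hist_def by (auto simp: le_Suc_eq)

lemma prob_X_Suc_Int_hist:
  assumes "l < n"
  shows "prob ({\<omega> \<in> space P. X (Suc l) \<omega> = t} \<inter> hist P X l p) = prob (hist P X l p) * jump_prob (p l) t"
proof -
  have "hist P X l (p(Suc l := t)) = hist P X l p"
    by (rule hist_cong) simp
  then show ?thesis
    using prob_hist_Suc[OF assms, of "p(Suc l := t)"] by (simp add: hist_Suc_upd)
qed

lemma sum_prob_hist: "l \<le> n \<Longrightarrow> (\<Sum>p\<in>histories l. prob (hist P X l p)) = 1"
proof (induction l)
  case 0
  have "hist P X 0 p = space P" if "p \<in> histories 0" for p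
  proof -
    have "p 0 = r"
      using PiE_mem[OF that[unfolded histories_def], of 0] by simp
    then show ?thesis
      using X_0 unfolding hist_def by auto
  qed
  then have "(\<Sum>p\<in>histories 0. prob (hist P X 0 p)) = card (histories 0)"
    by (simp add: prob_space)
  also have "card (histories 0) = 1"
    unfolding histories_def by (simp add: card_PiE)
  finally show ?case
    by simp
next
  case (Suc l)
  let ?extend = "\<lambda>(t, p). p(Suc l := t)"
  have histories_Suc: "histories (Suc l) = ?extend ` (reachable r (Suc l) \<times> histories l)"
    unfolding histories_def atMost_Suc by (rule PiE_insert_eq)
  have inj: "inj_on ?extend (reachable r (Suc l) \<times> histories l)"
    unfolding histories_def by (rule inj_combinator) simp
  have jump_prob_sum: "(\<Sum>t\<in>reachable r (Suc l). jump_prob (p l) t) = 1" if "p \<in> histories l" for p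
  proof (rule sum_jump_prob[OF finite_reachable])
    have "p l \<in> reachable r l"
      using that unfolding histories_def by auto
    then show "(\<lambda>(i, j, k). merge3 (p l) i j k) ` triples (p l) \<subseteq> reachable r (Suc l)"
      unfolding reachable.simps by (rule UN_upper)
    show "coal_total (p l) \<noteq> 0"
      using \<open>p l \<in> reachable r l\<close> coal_total_reachable alpha_pos Suc.prems by fastforce
  qed
  have "(\<Sum>p\<in>histories (Suc l). prob (hist P X (Suc l) p))
      = (\<Sum>(t, p)\<in>reachable r (Suc l) \<times> histories l. prob (hist P X l p) * jump_prob (p l) t)"
    unfolding histories_Suc sum.reindex[OF inj]
    using prob_X_Suc_Int_hist[of l] Suc.prems by (intro sum.cong refl) (auto simp: hist_Suc_upd)
  also have "\<dots> = (\<Sum>p\<in>histories l. prob (hist P X l p) * (\<Sum>t\<in>reachable r (Suc l). jump_prob (p l) t))"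
    by (simp add: sum.swap[of _ "reachable r (Suc l)"] sum.cartesian_product sum_distrib_left
        del: reachable.simps)
  finally show ?case
    using Suc jump_prob_sum by simp
qed

text \<open>The events \<open>hist P X l p\<close> need not cover \<open>space P\<close>; they only carry all of its mass.\<close>
lemma prob_eq_sum_histories:
  assumes "l \<le> n" "E \<in> events"
  shows "prob E = (\<Sum>p\<in>histories l. prob (E \<inter> hist P X l p))"
proof -
  let ?U = "\<Union>p\<in>histories l. hist P X l p"
  have U_event: "?U \<in> events"
    using hist_event finite_histories by auto
  have "prob ?U = (\<Sum>p\<in>histories l. prob (hist P X l p))"
    by (rule measure_finite_Union[OF finite_histories]) (use hist_event disjoint_family_on_hist in auto)
  then have "prob ?U = 1"
    using sum_prob_hist[OF assms(1)] by simp
  have "prob (E - ?U) \<le> prob (space P - ?U)"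
    using sets.sets_into_space[OF assms(2)] U_event by (intro finite_measure_mono) auto
  also have "\<dots> = 0"
    using prob_compl[OF U_event] \<open>prob ?U = 1\<close> by simp
  finally have null: "prob (E - ?U) = 0"
    using measure_nonneg[of P "E - ?U"] by linarith
  have "prob E = prob (E \<inter> ?U) + prob (E - ?U)"
    using assms(2) U_event by (subst finite_measure_Union[symmetric]) (auto intro: arg_cong[where f = prob])
  also have "E \<inter> ?U = (\<Union>p\<in>histories l. E \<inter> hist P X l p)"
    by blast
  also have "prob \<dots> = (\<Sum>p\<in>histories l. prob (E \<inter> hist P X l p))"
    using disjoint_family_on_hist hist_event assms(2)
    by (intro measure_finite_Union[OF finite_histories]) (auto simp: disjoint_family_on_def)
  finally show ?thesis
    using null by simp
qed

lemma prob_X_Suc_Int_X: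
  assumes "l < n"
  shows "prob ({\<omega> \<in> space P. X (Suc l) \<omega> = t} \<inter> {\<omega> \<in> space P. X l \<omega> = s})
           = prob {\<omega> \<in> space P. X l \<omega> = s} * jump_prob s t"
proof -
  let ?A = "{\<omega> \<in> space P. X (Suc l) \<omega> = t}" and ?B = "{\<omega> \<in> space P. X l \<omega> = s}"
  have restrict: "?B \<inter> hist P X l p = (if p l = s then hist P X l p else {})" for p
    unfolding hist_def by auto
  have "prob (?A \<inter> ?B) = (\<Sum>p\<in>histories l. prob (?A \<inter> (?B \<inter> hist P X l p)))"
    using prob_eq_sum_histories[of l "?A \<inter> ?B"] assms X_event by (simp add: Int_assoc)
  also have "\<dots> = (\<Sum>p\<in>histories l. prob (?B \<inter> hist P X l p) * jump_prob s t)"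
    unfolding restrict using prob_X_Suc_Int_hist[OF assms] by (intro sum.cong) auto
  also have "\<dots> = prob ?B * jump_prob s t"
    using prob_eq_sum_histories[of l ?B] assms X_event by (simp add: sum_distrib_right)
  finally show ?thesis .
qed

lemma cond_prob_hist_eq_cond_prob_X:
  assumes "l < n" "0 < prob (hist P X l p)"
  shows "cond_prob P {\<omega> \<in> space P. X (Suc l) \<omega> = t} (hist P X l p)
       = cond_prob P {\<omega> \<in> space P. X (Suc l) \<omega> = t} {\<omega> \<in> space P. X l \<omega> = p l}"
proof -
  have "prob (hist P X l p) \<le> prob {\<omega> \<in> space P. X l \<omega> = p l}"
    by (rule finite_measure_mono) (auto simp: hist_def intro: X_event)
  then show ?thesis
    unfolding cond_prob_def using prob_X_Suc_Int_hist[OF assms(1)] prob_X_Suc_Int_X[OF assms(1)] assms(2)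
    by simp
qed

lemma cond_prob_X_Suc:
  assumes "l < n" "length s = 2 * n + 1 - 2 * l" "sum_list s = sum_list r"
    and "0 < prob {\<omega> \<in> space P. X l \<omega> = s}"
  shows "cond_prob P {\<omega> \<in> space P. X (Suc l) \<omega> = t} {\<omega> \<in> space P. X l \<omega> = s}
       = coal_rate s t / alpha (Suc l)"
  unfolding cond_prob_def using prob_X_Suc_Int_X[OF assms(1)] assms(4)
  by (simp add: jump_prob_def coal_total_eq_alpha[OF assms(1-3)])

section \<open>The holding times\<close>

definition holding_law :: "(nat \<Rightarrow> real) measure" where
  "holding_law = PiM {1..n} (\<lambda>k. Exp_law (alpha k))"

definition holding_times :: "'w \<Rightarrow> nat \<Rightarrow> real" where
  "holding_times \<omega> = (\<lambda>k\<in>{1..n}. H k \<omega>)"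

definition jump_chain :: "'w \<Rightarrow> nat \<Rightarrow> real list" where
  "jump_chain \<omega> = (\<lambda>k\<in>{..n}. X k \<omega>)"

lemma prob_space_holding_law: "prob_space holding_law"
  unfolding holding_law_def using alpha_pos by (intro prob_space_PiM prob_space_Exp_law)

lemma holding_times_measurable: "holding_times \<in> measurable P (PiM {1..n} (\<lambda>_. borel))"
  unfolding holding_times_def using H_measurable by (rule measurable_restrict)

lemma jump_chain_measurable: "jump_chain \<in> measurable P (PiM {..n} (\<lambda>_. count_space UNIV))"
  unfolding jump_chain_def using X_measurable by (rule measurable_restrict)

lemma prob_hist_Int_holding_times:
  assumes "p \<in> histories n" "B \<in> sets (PiM {1..n} (\<lambda>_. borel))"
  shows "prob (hist P X n p \<inter> (holding_times -` B \<inter> space P)) = prob (hist P X n p) * measure holding_law B"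
  unfolding holding_times_def holding_law_def
proof (rule prob_Int_vimage_PiM[OF _ _ _ H_measurable hist_event _ assms(2)])
  fix A :: "nat \<Rightarrow> real set"
  assume A: "\<And>k. A k \<in> sets borel"
  have "(\<Prod>k=1..n. measure (Exp_law (coal_total (p (k - 1)))) (A k))
      = (\<Prod>k\<in>{1..n}. measure (Exp_law (alpha k)) (A k))"
    using coal_total_history[OF assms(1)] by (intro prod.cong) auto
  then show "prob (hist P X n p \<inter> {\<omega> \<in> space P. \<forall>k\<in>{1..n}. H k \<omega> \<in> A k})
      = prob (hist P X n p) * (\<Prod>k\<in>{1..n}. measure (Exp_law (alpha k)) (A k))"
    using prob_hist_Int_holding_rect[OF A] by simp
qed (simp_all add: alpha_pos prob_space_Exp_law)

text \<open>Conditionally on each history of the jump chain the holding times have the same law,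
  so they are independent of the chain.\<close>
lemma prob_holding_times_Int_jump_chain:
  assumes B: "B \<in> sets (PiM {1..n} (\<lambda>_. borel))"
    and C: "C \<in> sets (PiM {..n} (\<lambda>_. count_space UNIV))"
  shows "prob ((holding_times -` B \<inter> space P) \<inter> (jump_chain -` C \<inter> space P))
           = measure holding_law B * prob (jump_chain -` C \<inter> space P)"
proof -
  let ?G = "holding_times -` B \<inter> space P" and ?F = "jump_chain -` C \<inter> space P"
  have G_event: "?G \<in> events" and F_event: "?F \<in> events"
    using measurable_sets[OF holding_times_measurable B] measurable_sets[OF jump_chain_measurable C] .
  have F_hist: "?F \<inter> hist P X n p = (if p \<in> C then hist P X n p else {})" if "p \<in> histories n" for p
  proof -
    have "jump_chain \<omega> = p" if "\<omega> \<in> hist P X n p" for \<omega>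
      using that \<open>p \<in> histories n\<close> unfolding jump_chain_def hist_def histories_def
      by (auto simp: PiE_def extensional_def fun_eq_iff)
    then show ?thesis
      unfolding hist_def by auto
  qed
  have "prob (?G \<inter> ?F) = (\<Sum>p\<in>histories n. prob (?G \<inter> ?F \<inter> hist P X n p))"
    using G_event F_event by (intro prob_eq_sum_histories) auto
  also have "\<dots> = (\<Sum>p\<in>histories n. measure holding_law B * prob (?F \<inter> hist P X n p))"
  proof (intro sum.cong refl)
    fix p
    assume p: "p \<in> histories n"
    have "?G \<inter> ?F \<inter> hist P X n p = (hist P X n p \<inter> ?G) \<inter> (?F \<inter> hist P X n p)"
      by blast
    then show "prob (?G \<inter> ?F \<inter> hist P X n p) = measure holding_law B * prob (?F \<inter> hist P X n p)"
      unfolding F_hist[OF p] using prob_hist_Int_holding_times[OF p B]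
      by (cases "p \<in> C") (simp_all add: Int_absorb2)
  qed
  also have "\<dots> = measure holding_law B * prob ?F"
    using prob_eq_sum_histories[of n ?F] F_event by (simp add: sum_distrib_left)
  finally show ?thesis .
qed

lemma prob_holding_times:
  assumes "B \<in> sets (PiM {1..n} (\<lambda>_. borel))"
  shows "prob (holding_times -` B \<inter> space P) = measure holding_law B"
proof -
  have "jump_chain -` space (PiM {..n} (\<lambda>_. count_space UNIV)) \<inter> space P = space P"
    using measurable_space[OF jump_chain_measurable] by blast
  then show ?thesis
    using prob_holding_times_Int_jump_chain[OF assms sets.top] by (simp add: prob_space)
qed

lemma distr_holding_times: "distr P (PiM {1..n} (\<lambda>_. borel)) holding_times = holding_law"
proof (rule measure_eqI)
  interpret Q: prob_space holding_law
    by (rule prob_space_holding_law)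
  show "sets (distr P (PiM {1..n} (\<lambda>_. borel)) holding_times) = sets holding_law"
    unfolding holding_law_def sets_distr by (rule sets_PiM_cong) simp_all
  fix B
  assume "B \<in> sets (distr P (PiM {1..n} (\<lambda>_. borel)) holding_times)"
  then have B: "B \<in> sets (PiM {1..n} (\<lambda>_. borel))"
    by simp
  show "emeasure (distr P (PiM {1..n} (\<lambda>_. borel)) holding_times) B = emeasure holding_law B"
    unfolding emeasure_distr[OF holding_times_measurable B] emeasure_eq_measure Q.emeasure_eq_measure
    by (simp add: prob_holding_times[OF B])
qed

lemma distr_holding_time:
  assumes "k \<in> {1..n}"
  shows "distr P borel (H k) = Exp_law (alpha k)"
proof -
  have "distr P borel (H k) = distr P borel ((\<lambda>h. h k) \<circ> holding_times)"
    using assms by (intro distr_cong) (auto simp: holding_times_def)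
  also have "\<dots> = distr (distr P (PiM {1..n} (\<lambda>_. borel)) holding_times) borel (\<lambda>h. h k)"
    using assms by (intro distr_distr[symmetric] holding_times_measurable measurable_component_singleton)
  also have "\<dots> = distr holding_law (Exp_law (alpha k)) (\<lambda>h. h k)"
    unfolding distr_holding_times by (rule distr_cong) simp_all
  also have "\<dots> = Exp_law (alpha k)"
    unfolding holding_law_def using assms alpha_pos by (intro distr_PiM_component prob_space_Exp_law)
  finally show ?thesis .
qed

lemma indep_vars_holding_times: "indep_vars (\<lambda>_. borel) H {1..n}"
proof (cases "n = 0")
  case True
  then show ?thesis
    by (simp add: indep_vars_def indep_sets_def)
next
  case False
  have "distr P (PiM {1..n} (\<lambda>_. borel)) holding_times = PiM {1..n} (\<lambda>k. distr P borel (H k))"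
    unfolding distr_holding_times holding_law_def by (rule PiM_cong) (simp_all add: distr_holding_time)
  then show ?thesis
    using False H_measurable unfolding holding_times_def by (subst indep_vars_iff_distr_eq_PiM) simp_all
qed

lemma indep_set_holding_times_jump_chain:
  assumes f: "f \<in> measurable (PiM {1..n} (\<lambda>_. borel)) N"
  shows "indep_set (sets (vimage_algebra (space P) (\<lambda>\<omega>. f (holding_times \<omega>)) N))
      (sets (vimage_algebra (space P) jump_chain (PiM {..n} (\<lambda>_. count_space UNIV))))"
proof -
  have f_holding: "(\<lambda>\<omega>. f (holding_times \<omega>)) \<in> measurable P N"
    using measurable_comp[OF holding_times_measurable f] by (simp add: comp_def)
  have vimage_f: "sets (vimage_algebra (space P) (\<lambda>\<omega>. f (holding_times \<omega>)) N)
      = {(\<lambda>\<omega>. f (holding_times \<omega>)) -` D \<inter> space P | D. D \<in> sets N}"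
    using measurable_space[OF f_holding] by (intro sets_vimage_algebra2) auto
  have vimage_jump: "sets (vimage_algebra (space P) jump_chain (PiM {..n} (\<lambda>_. count_space UNIV)))
      = {jump_chain -` C \<inter> space P | C. C \<in> sets (PiM {..n} (\<lambda>_. count_space UNIV))}"
    using measurable_space[OF jump_chain_measurable] by (intro sets_vimage_algebra2) auto
  show ?thesis
    unfolding vimage_f vimage_jump
  proof (rule indep_setI)
    show "{(\<lambda>\<omega>. f (holding_times \<omega>)) -` D \<inter> space P | D. D \<in> sets N} \<subseteq> events"
      "{jump_chain -` C \<inter> space P | C. C \<in> sets (PiM {..n} (\<lambda>_. count_space UNIV))} \<subseteq> events"
      using measurable_sets[OF f_holding] measurable_sets[OF jump_chain_measurable] by auto
  next
    fix a b
    assume "a \<in> {(\<lambda>\<omega>. f (holding_times \<omega>)) -` D \<inter> space P | D. D \<in> sets N}"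
      and "b \<in> {jump_chain -` C \<inter> space P | C. C \<in> sets (PiM {..n} (\<lambda>_. count_space UNIV))}"
    then obtain D C where D: "D \<in> sets N" "a = (\<lambda>\<omega>. f (holding_times \<omega>)) -` D \<inter> space P"
      and C: "C \<in> sets (PiM {..n} (\<lambda>_. count_space UNIV))" "b = jump_chain -` C \<inter> space P"
      by blast
    let ?B = "f -` D \<inter> space (PiM {1..n} (\<lambda>_. borel))"
    have B: "?B \<in> sets (PiM {1..n} (\<lambda>_. borel))"
      using measurable_sets[OF f D(1)] .
    have a: "a = holding_times -` ?B \<inter> space P"
      unfolding D(2) using measurable_space[OF holding_times_measurable] by auto
    show "prob (a \<inter> b) = prob a * prob b"
      unfolding a C(2) prob_holding_times_Int_jump_chain[OF B C(1)] prob_holding_times[OF B] ..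
  qed
qed

lemma indep_set_arrival_times_jump_chain:
  "indep_set
     (sets (vimage_algebra (space P) (\<lambda>\<omega>. \<lambda>k\<in>{..n}. \<Sum>m=1..k. H m \<omega>) (PiM {..n} (\<lambda>_. borel))))
     (sets (vimage_algebra (space P) (\<lambda>\<omega>. \<lambda>k\<in>{..n}. X k \<omega>) (PiM {..n} (\<lambda>_. count_space UNIV))))"
proof -
  let ?partial_sums = "\<lambda>h. \<lambda>k\<in>{..n}. \<Sum>m=1..k. h m :: real"
  have partial_sums: "?partial_sums \<in> measurable (PiM {1..n} (\<lambda>_. borel)) (PiM {..n} (\<lambda>_. borel))"
    by (intro measurable_restrict borel_measurable_sum measurable_component_singleton) auto
  have "(\<lambda>\<omega>. \<lambda>k\<in>{..n}. \<Sum>m=1..k. H m \<omega>) = (\<lambda>\<omega>. ?partial_sums (holding_times \<omega>))"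
    by (auto simp: holding_times_def fun_eq_iff)
  then show ?thesis
    using indep_set_holding_times_jump_chain[OF partial_sums] unfolding jump_chain_def by simp
qed

end

theorem proposition2p2:
  fixes P :: "'w measure" and r :: "real list" and n :: nat
    and X :: "nat \<Rightarrow> 'w \<Rightarrow> real list" and H :: "nat \<Rightarrow> 'w \<Rightarrow> real"
  defines "N \<equiv> 2 * n + 1"
  defines "M \<equiv> sum_list r"
  defines "T \<equiv> (\<lambda>k \<omega>. \<Sum>m=1..k. H m \<omega>)"
  defines "\<alpha> \<equiv> (\<lambda>k::nat. (M + real N + 2 - 2 * real k) * (real N + 1 - 2 * real k)
                          * (real N - 2 * real k) / 2)"
  assumes r_conf: "r \<in> Sdown_fin" and r_len: "length r = N"
    and coal: "ternary_coalescent_jump_hold P r n X H"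
  shows
    "prob_space.indep_vars P (\<lambda>_. borel) H {1..n}
     \<and> (\<forall>k\<in>{1..n}. distributed P lborel (H k) (exponential_density (\<alpha> k)))
     \<and> prob_space.indep_set P
         (sets (vimage_algebra (space P) (\<lambda>\<omega>. \<lambda>k\<in>{..n}. T k \<omega>) (Pi\<^sub>M {..n} (\<lambda>_. borel))))
         (sets (vimage_algebra (space P) (\<lambda>\<omega>. \<lambda>k\<in>{..n}. X k \<omega>) (Pi\<^sub>M {..n} (\<lambda>_. count_space UNIV))))
     \<and> (\<forall>l<n. \<forall>ss t. measure P (hist P X l ss) > 0 \<longrightarrow>
          cond_prob P {\<omega> \<in> space P. X (Suc l) \<omega> = t} (hist P X l ss)
          = cond_prob P {\<omega> \<in> space P. X (Suc l) \<omega> = t} {\<omega> \<in> space P. X l \<omega> = ss l})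
     \<and> (\<forall>l<n. \<forall>s i j k. s \<in> Sdown_fin \<and> length s = N - 2 * l \<and> sum_list s = M
            \<and> measure P {\<omega> \<in> space P. X l \<omega> = s} > 0 \<and> i < j \<and> j < k \<and> k < N - 2 * l \<longrightarrow>
          cond_prob P {\<omega> \<in> space P. X (Suc l) \<omega> = merge3 s i j k} {\<omega> \<in> space P. X l \<omega> = s}
          = (\<Sum>x\<in>{x \<in> triples s. merge3 s (fst x) (fst (snd x)) (snd (snd x)) = merge3 s i j k}.
               trate s x) / \<alpha> (Suc l))"
proof -
  have "prob_space P"
    using coal unfolding ternary_coalescent_jump_hold_def by blast
  moreover have "0 \<le> sum_list r"
    using r_conf unfolding Sdown_fin_def by (auto intro: sum_list_nonneg less_imp_le)
  ultimately interpret ternary_jump_hold P r n X H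
    using r_len coal unfolding N_def by (intro ternary_jump_hold.intro ternary_jump_hold_axioms.intro)
  have \<alpha>_eq: "\<alpha> = alpha"
    unfolding \<alpha>_def alpha_def M_def N_def ..
  have "distributed P lborel (H k) (exponential_density (\<alpha> k))" if "k \<in> {1..n}" for k
    using distr_holding_time[OF that] H_measurable[of k]
    unfolding distributed_def \<alpha>_eq Exp_law_def by (simp add: distr_cong[OF refl sets_lborel])
  moreover have "cond_prob P {\<omega> \<in> space P. X (Suc l) \<omega> = merge3 s i j k} {\<omega> \<in> space P. X l \<omega> = s}
      = coal_rate s (merge3 s i j k) / \<alpha> (Suc l)"
    if "l < n" "length s = N - 2 * l" "sum_list s = M" "0 < prob {\<omega> \<in> space P. X l \<omega> = s}" for l s i j k
    using cond_prob_X_Suc that unfolding \<alpha>_eq N_def M_def by simp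
  ultimately show ?thesis
    unfolding T_def coal_rate_def
    using indep_vars_holding_times indep_set_arrival_times_jump_chain cond_prob_hist_eq_cond_prob_X
    by blast
qed

end
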